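(* There exists $\delta>0$ such that for all sufficiently large $|S|$ the following holds: for integers $(w_i)_{i\in S}$ indexed by a finite set $S$, if $|w(2^S)|\ge 2^{(1-\delta)|S|}$, then $\|b_S\|_2\le 2^{0.661|S|}$.
   Context: For $X\subseteq S$, $w(X)=\sum_{i\in X}w_i$, and $w(2^S)=\{w(X):X\subseteq S\}$. The function $b_S:\mathbb{Z}\to\mathbb{Z}$ is defined by $b_S(x)=|\{X\subseteq S: w(X)=x\}|$, and $\|b_S\|_2=\big(\sum_{x\in\mathbb{Z}}b_S(x)^2\big)^{1/2}$. *)

theory Defs
  imports "HOL-Analysis.Analysis"
begin

definition subset_sums :: "'a set \<Rightarrow> ('a \<Rightarrow> int) \<Rightarrow> int set" where
  "subset_sums S w = (\<lambda>X. \<Sum>i\<in>X. w i) ` Pow S"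

definition bcount :: "'a set \<Rightarrow> ('a \<Rightarrow> int) \<Rightarrow> int \<Rightarrow> nat" where
  "bcount S w x = card {X. X \<subseteq> S \<and> (\<Sum>i\<in>X. w i) = x}"

text \<open>The l2 norm of b_S; b_S vanishes outside subset_sums S w (a finite set for finite S).\<close>
definition bnorm2 :: "'a set \<Rightarrow> ('a \<Rightarrow> int) \<Rightarrow> real" where
  "bnorm2 S w = sqrt (\<Sum>x\<in>subset_sums S w. (real (bcount S w x))^2)"

end

theory Submission
  imports Defs
begin

text \<open>
  The square of the norm counts the collisions, i.e. the pairs \<open>(X, Y)\<close> of subsets with
  \<open>w(X) = w(Y)\<close>. Discarding the common part \<open>X \<inter> Y\<close> leaves a disjoint collision
  \<open>(A, B) = (X - Y, Y - X)\<close>, and \<open>X \<inter> Y \<subseteq> S - (A \<union> B)\<close>, so there are at most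
  \<open>2^n \<Sum> 2^-(|A|+|B|)\<close> collisions. Multiplying by the number of subset sums amounts to adding
  a set \<open>Z\<close> from a system of representatives of the subset sums. The triple \<open>(A, B, Z)\<close> is
  encoded injectively by the pair of subsets \<open>G = (A \<inter> Z) \<union> (B - Z)\<close>, \<open>H = (Z - B) \<union> A\<close>:
  the sum \<open>w(Z) = w(H) + w(G \<inter> H) - w(G - H)\<close> identifies \<open>Z\<close>, and then \<open>A\<close> and \<open>B\<close> can be read
  off. Up to exchanging \<open>A\<close> and \<open>B\<close> one has \<open>|G| \<le> (|A| + |B|)/2\<close>, so the weighted count of triples
  is at most \<open>2 \<Sum>\<^sub>G\<^sub>,\<^sub>H 4^-|G| = 2 (5/2)^n\<close>. Altogether \<open>\<parallel>b\<^sub>S\<parallel>\<^sup>2 |w(2^S)| \<le> 2\<cdot>5^n\<close>, and since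
  \<open>log\<^sub>2 5 < 2.322\<close>, a set of subset sums of size \<open>2^(1-\<delta>)n\<close> forces \<open>\<parallel>b\<^sub>S\<parallel>\<^sup>2 \<le> 2^1.322n\<close>.
\<close>

lemma sum_power_card_Pow:
  fixes c :: "'c::comm_semiring_1"
  assumes "finite S"
  shows "(\<Sum>X\<in>Pow S. c ^ card X) = (1 + c) ^ card S"
  using prod_add[OF assms, of "\<lambda>_. c" "\<lambda>_. 1"] by (simp add: add.commute)

lemma sum_le_twice_sum_by_involution:
  fixes f :: "'a \<Rightarrow> 'b::ordered_comm_monoid_add"
  assumes "finite Q"
    and into: "\<And>p. p \<in> Q \<Longrightarrow> \<sigma> p \<in> Q"
    and involution: "\<And>p. p \<in> Q \<Longrightarrow> \<sigma> (\<sigma> p) = p"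
    and invariant: "\<And>p. p \<in> Q \<Longrightarrow> f (\<sigma> p) = f p"
    and nonneg: "\<And>p. p \<in> Q \<Longrightarrow> 0 \<le> f p"
    and either: "\<And>p. p \<in> Q \<Longrightarrow> P p \<or> P (\<sigma> p)"
  shows "sum f Q \<le> sum f {p \<in> Q. P p} + sum f {p \<in> Q. P p}"
proof -
  let ?G = "{p \<in> Q. P p}"
  have fin: "finite ?G" using \<open>finite Q\<close> by simp
  have cover: "Q \<subseteq> ?G \<union> \<sigma> ` ?G"
  proof
    fix p assume "p \<in> Q"
    then have "p \<in> ?G \<or> \<sigma> p \<in> ?G" using into either by blast
    then show "p \<in> ?G \<union> \<sigma> ` ?G" using involution \<open>p \<in> Q\<close> by (metis UnI1 UnI2 image_eqI)
  qed
  have image_in: "\<sigma> ` ?G \<subseteq> Q" using into by auto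
  have "sum f Q \<le> sum f ?G + sum f (\<sigma> ` ?G - ?G)"
  proof -
    have "sum f Q \<le> sum f (?G \<union> (\<sigma> ` ?G - ?G))"
      using cover image_in fin nonneg by (intro sum_mono2) auto
    also have "\<dots> = sum f ?G + sum f (\<sigma> ` ?G - ?G)"
      using fin by (intro sum.union_disjoint) auto
    finally show ?thesis .
  qed
  also have "sum f (\<sigma> ` ?G - ?G) \<le> sum f (\<sigma> ` ?G)"
    using fin image_in nonneg by (intro sum_mono2) auto
  also have "sum f (\<sigma> ` ?G) = sum f ?G"
  proof -
    have "inj_on \<sigma> ?G" by (metis (no_types, lifting) inj_onI involution mem_Collect_eq)
    then show ?thesis using invariant by (simp add: sum.reindex)
  qed
  finally show ?thesis by (simp add: add_left_mono)
qed

definition collisions :: "'a set \<Rightarrow> ('a \<Rightarrow> 'b::comm_monoid_add) \<Rightarrow> ('a set \<times> 'a set) set" where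
  "collisions S w = {(X, Y). X \<subseteq> S \<and> Y \<subseteq> S \<and> sum w X = sum w Y}"

definition disjoint_collisions :: "'a set \<Rightarrow> ('a \<Rightarrow> 'b::comm_monoid_add) \<Rightarrow> ('a set \<times> 'a set) set" where
  "disjoint_collisions S w = {(A, B) \<in> collisions S w. A \<inter> B = {}}"

lemma finite_collisions: "finite S \<Longrightarrow> finite (collisions S w)"
  by (rule finite_subset[of _ "Pow S \<times> Pow S"]) (auto simp: collisions_def)

lemma finite_disjoint_collisions: "finite S \<Longrightarrow> finite (disjoint_collisions S w)"
  by (rule finite_subset[OF _ finite_collisions]) (auto simp: disjoint_collisions_def)

lemma disjoint_collisionsD:
  assumes "(A, B) \<in> disjoint_collisions S w" and "finite S"
  shows "A \<subseteq> S" "B \<subseteq> S" "A \<inter> B = {}" "sum w A = sum w B" "finite A" "finite B"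
    "card A + card B \<le> card S"
proof -
  show AB: "A \<subseteq> S" "B \<subseteq> S" "A \<inter> B = {}" "sum w A = sum w B"
    using assms(1) by (auto simp: disjoint_collisions_def collisions_def)
  show fin: "finite A" "finite B" using AB assms(2) finite_subset by auto
  have "card A + card B = card (A \<union> B)" using fin AB(3) by (simp add: card_Un_disjoint)
  also have "\<dots> \<le> card S" using AB assms(2) by (intro card_mono) auto
  finally show "card A + card B \<le> card S" .
qed

lemma disjoint_collisions_swap:
  "(A, B) \<in> disjoint_collisions S w \<Longrightarrow> (B, A) \<in> disjoint_collisions S w"
  by (auto simp: disjoint_collisions_def collisions_def)

lemma finite_subset_sums: "finite S \<Longrightarrow> finite (subset_sums S w)"
  by (simp add: subset_sums_def)

lemma sum_bcount_squares:
  assumes "finite S"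
  shows "(\<Sum>x\<in>subset_sums S w. bcount S w x ^ 2) = card (collisions S w)"
proof -
  have img: "(\<lambda>p. sum w (fst p)) ` collisions S w \<subseteq> subset_sums S w"
    by (auto simp: collisions_def subset_sums_def)
  have fiber: "{p \<in> collisions S w. sum w (fst p) = x} =
      {X. X \<subseteq> S \<and> sum w X = x} \<times> {X. X \<subseteq> S \<and> sum w X = x}" for x
    by (auto simp: collisions_def)
  show ?thesis
    using sum.group[OF finite_collisions[OF assms] finite_subset_sums[OF assms] img, of "\<lambda>_. 1::nat"]
    by (simp add: fiber bcount_def card_cartesian_product power2_eq_square)
qed

lemma bnorm2_squared:
  assumes "finite S"
  shows "bnorm2 S w ^ 2 = real (card (collisions S w))"
proof -
  have "(\<Sum>x\<in>subset_sums S w. real (bcount S w x) ^ 2) = real (card (collisions S w))"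
    using arg_cong[OF sum_bcount_squares[OF assms, of w], of real] by simp
  then show ?thesis by (simp add: bnorm2_def sum_nonneg)
qed

lemma card_collisions_with_difference_le:
  assumes "finite S" and AB: "(A, B) \<in> disjoint_collisions S w"
  shows "real (card {p \<in> collisions S w. (fst p - snd p, snd p - fst p) = (A, B)})
    \<le> 2 ^ card S * (1/2) ^ (card A + card B)"
proof -
  let ?F = "{p \<in> collisions S w. (fst p - snd p, snd p - fst p) = (A, B)}"
  note AB' = disjoint_collisionsD[OF AB \<open>finite S\<close>]
  have "inj_on (\<lambda>p. fst p \<inter> snd p) ?F"
    by (rule inj_onI) (auto, blast+)
  moreover have "(\<lambda>p. fst p \<inter> snd p) ` ?F \<subseteq> Pow (S - (A \<union> B))"
    by (auto simp: collisions_def)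
  ultimately have "card ?F \<le> card (Pow (S - (A \<union> B)))"
    using \<open>finite S\<close> by (intro card_inj_on_le) auto
  also have "\<dots> = 2 ^ (card S - (card A + card B))"
    using \<open>finite S\<close> AB' by (simp add: card_Pow card_Diff_subset card_Un_disjoint)
  finally have "real (card ?F) \<le> real (2 ^ (card S - (card A + card B)))"
    by (rule of_nat_mono)
  also have "\<dots> = 2 ^ card S * (1/2) ^ (card A + card B)"
  proof -
    have "(2::real) ^ card S = 2 ^ (card S - (card A + card B)) * 2 ^ (card A + card B)"
      using AB'(7) by (simp flip: power_add)
    then show ?thesis by (simp add: power_one_over)
  qed
  finally show ?thesis .
qed

lemma card_collisions_le:
  fixes w :: "'a \<Rightarrow> 'b::cancel_comm_monoid_add"
  assumes "finite S"
  shows "real (card (collisions S w))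
    \<le> 2 ^ card S * (\<Sum>(A, B)\<in>disjoint_collisions S w. (1/2) ^ (card A + card B))"
proof -
  let ?d = "\<lambda>p. (fst p - snd p, snd p - fst p)"
  have differences: "?d ` collisions S w \<subseteq> disjoint_collisions S w"
  proof clarify
    fix X Y assume "(X, Y) \<in> collisions S w"
    then have XY: "X \<subseteq> S" "Y \<subseteq> S" "sum w X = sum w Y" by (auto simp: collisions_def)
    then have "finite X" "finite Y" using assms finite_subset by auto
    then have "sum w (X \<inter> Y) + sum w (X - Y) = sum w (X \<inter> Y) + sum w (Y - X)"
      using XY(3) sum.Int_Diff[of X w Y] sum.Int_Diff[of Y w X] by (simp add: Int_commute)
    then have "sum w (X - Y) = sum w (Y - X)" by simp
    then show "?d (X, Y) \<in> disjoint_collisions S w"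
      using XY by (auto simp: disjoint_collisions_def collisions_def)
  qed
  then have "card (collisions S w)
      = (\<Sum>q\<in>disjoint_collisions S w. card {p \<in> collisions S w. ?d p = q})"
    using sum.group[OF finite_collisions[OF assms] finite_disjoint_collisions[OF assms] differences,
        of "\<lambda>_. 1::nat"] by simp
  then have "real (card (collisions S w))
      = (\<Sum>q\<in>disjoint_collisions S w. real (card {p \<in> collisions S w. ?d p = q}))"
    by simp
  also have "\<dots> \<le> (\<Sum>(A, B)\<in>disjoint_collisions S w. 2 ^ card S * (1/2) ^ (card A + card B))"
    using card_collisions_with_difference_le[OF assms]
    by (intro sum_mono) (auto split: prod.splits)
  finally show ?thesis by (simp add: sum_distrib_left case_prod_beta)
qed

definition collision_code :: "('a set \<times> 'a set) \<times> 'a set \<Rightarrow> 'a set \<times> 'a set" where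
  "collision_code = (\<lambda>((A, B), Z). ((A \<inter> Z) \<union> (B - Z), (Z - B) \<union> A))"

lemma sum_eq_collision_code:
  fixes w :: "'a \<Rightarrow> 'b::ab_group_add"
  assumes fin: "finite A" "finite B" "finite Z" and "A \<inter> B = {}" "sum w A = sum w B"
    and code: "collision_code ((A, B), Z) = (G, H)"
  shows "sum w Z = sum w H + sum w (G \<inter> H) - sum w (G - H)"
proof -
  have GH: "G \<inter> H = A \<inter> Z" "G - H = B - Z" "H = (Z - (A \<union> B)) \<union> A"
    using \<open>A \<inter> B = {}\<close> code by (auto simp: collision_code_def)
  have "sum w H = sum w (Z - (A \<union> B)) + sum w A"
    unfolding GH(3) using fin by (intro sum.union_disjoint) auto
  moreover have "sum w Z = sum w (Z - (A \<union> B)) + sum w (A \<inter> Z) + sum w (B \<inter> Z)"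
  proof -
    have "sum w (Z \<inter> (A \<union> B)) = sum w (A \<inter> Z) + sum w (B \<inter> Z)"
    proof -
      have "Z \<inter> (A \<union> B) = (A \<inter> Z) \<union> (B \<inter> Z)" by blast
      moreover have "(A \<inter> Z) \<inter> (B \<inter> Z) = {}" using \<open>A \<inter> B = {}\<close> by blast
      ultimately show ?thesis using fin by (simp add: sum.union_disjoint)
    qed
    then show ?thesis using sum.Int_Diff[OF fin(3), of w "A \<union> B"] by (simp add: add.commute)
  qed
  moreover have "sum w B = sum w (B \<inter> Z) + sum w (B - Z)"
    using fin by (simp add: sum.Int_Diff)
  ultimately show ?thesis
    using \<open>sum w A = sum w B\<close> GH(1,2) by (simp add: algebra_simps)
qed

lemma collision_code_decode:
  assumes "A \<inter> B = {}" and "collision_code ((A, B), Z) = (G, H)"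
  shows "A = (H - Z) \<union> (G \<inter> Z)" "B = (G - Z) \<union> (Z - H)"
  using assms by (auto simp: collision_code_def)

lemma inj_on_collision_code:
  fixes w :: "'a \<Rightarrow> 'b::ab_group_add"
  assumes "finite S" and "R \<subseteq> Pow S" and "inj_on (sum w) R"
  shows "inj_on collision_code (disjoint_collisions S w \<times> R)"
proof (rule inj_onI)
  fix p p'
  assume "p \<in> disjoint_collisions S w \<times> R" "p' \<in> disjoint_collisions S w \<times> R"
    and same_code: "collision_code p = collision_code p'"
  then obtain A B Z A' B' Z' where p: "p = ((A, B), Z)" "p' = ((A', B'), Z')"
    and AB: "(A, B) \<in> disjoint_collisions S w" and A'B': "(A', B') \<in> disjoint_collisions S w"
    and "Z \<in> R" "Z' \<in> R"
    by (metis mem_Sigma_iff prod.collapse)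
  have same: "collision_code ((A, B), Z) = collision_code ((A', B'), Z')"
    using same_code p by simp
  obtain G H where GH: "collision_code ((A, B), Z) = (G, H)" by fastforce
  note ABD = disjoint_collisionsD[OF AB \<open>finite S\<close>] and A'B'D = disjoint_collisionsD[OF A'B' \<open>finite S\<close>]
  have "finite Z" "finite Z'"
    using \<open>Z \<in> R\<close> \<open>Z' \<in> R\<close> \<open>R \<subseteq> Pow S\<close> \<open>finite S\<close> by (auto intro: finite_subset)
  then have "sum w Z = sum w Z'"
    using sum_eq_collision_code[OF ABD(5,6) _ ABD(3,4) GH]
      sum_eq_collision_code[OF A'B'D(5,6) _ A'B'D(3,4) same[unfolded GH, symmetric]] by simp
  then have "Z = Z'" using \<open>inj_on (sum w) R\<close> \<open>Z \<in> R\<close> \<open>Z' \<in> R\<close> by (auto dest: inj_onD)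
  then show "p = p'"
    using collision_code_decode[OF ABD(3) GH] collision_code_decode[OF A'B'D(3) same[unfolded GH, symmetric]]
    by (simp add: p)
qed

lemma card_collision_code_swap:
  assumes "finite A" "finite B" "A \<inter> B = {}"
  shows "card (fst (collision_code ((A, B), Z))) + card (fst (collision_code ((B, A), Z)))
    = card A + card B"
proof -
  have "card ((A \<inter> Z) \<union> (B - Z)) = card (A \<inter> Z) + card (B - Z)"
    "card ((B \<inter> Z) \<union> (A - Z)) = card (B \<inter> Z) + card (A - Z)"
    using assms by (auto intro: card_Un_disjoint)
  moreover have "card A = card (A \<inter> Z) + card (A - Z)" "card B = card (B \<inter> Z) + card (B - Z)"
    using assms card_Int_Diff by blast+
  ultimately show ?thesis by (simp add: collision_code_def)
qed

lemma sum_quarter_power_collision_code_le: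
  fixes w :: "'a \<Rightarrow> 'b::ab_group_add"
  assumes "finite S" and "R \<subseteq> Pow S" and "inj_on (sum w) R"
    and G: "G \<subseteq> disjoint_collisions S w \<times> R"
  shows "(\<Sum>p\<in>G. (1/4::real) ^ card (fst (collision_code p))) \<le> (5/2) ^ card S"
proof -
  have "inj_on collision_code G"
    using inj_on_subset[OF inj_on_collision_code[OF assms(1-3)] G] .
  then have "(\<Sum>p\<in>G. (1/4::real) ^ card (fst (collision_code p)))
      = (\<Sum>c\<in>collision_code ` G. (1/4) ^ card (fst c))"
    by (simp add: sum.reindex)
  also have "\<dots> \<le> (\<Sum>c\<in>Pow S \<times> Pow S. (1/4) ^ card (fst c))"
  proof (rule sum_mono2)
    show "collision_code ` G \<subseteq> Pow S \<times> Pow S"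
      using G \<open>R \<subseteq> Pow S\<close>
      by (auto simp: collision_code_def disjoint_collisions_def collisions_def)
  qed (use \<open>finite S\<close> in auto)
  also have "\<dots> = 2 ^ card S * (\<Sum>X\<in>Pow S. (1/4) ^ card X)"
    unfolding sum_distrib_left
    using sum.cartesian_product[of "\<lambda>X Y. (1/4::real) ^ card X" "Pow S" "Pow S"] \<open>finite S\<close>
    by (simp add: case_prod_beta card_Pow)
  also have "\<dots> = (5/2) ^ card S"
    using \<open>finite S\<close> by (simp add: sum_power_card_Pow flip: power_mult_distrib)
  finally show ?thesis .
qed

lemma sum_disjoint_collisions_times_representatives_le:
  fixes w :: "'a \<Rightarrow> 'b::ab_group_add"
  assumes "finite S" and "R \<subseteq> Pow S" and "inj_on (sum w) R"
  shows "(\<Sum>((A, B), Z)\<in>disjoint_collisions S w \<times> R. (1/2::real) ^ (card A + card B))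
    \<le> 2 * (5/2) ^ card S"
proof -
  let ?Q = "disjoint_collisions S w \<times> R"
  define weight :: "('a set \<times> 'a set) \<times> 'a set \<Rightarrow> real"
    where "weight = (\<lambda>((A, B), Z). (1/2) ^ (card A + card B))"
  define balanced :: "('a set \<times> 'a set) \<times> 'a set \<Rightarrow> bool"
    where "balanced = (\<lambda>((A, B), Z). 2 * card (fst (collision_code ((A, B), Z))) \<le> card A + card B)"
  let ?G = "{p \<in> ?Q. balanced p}"
  have "finite R" using assms(1,2) finite_subset by (auto simp: finite_Pow_iff)
  have "sum weight ?Q \<le> sum weight ?G + sum weight ?G"
  proof (rule sum_le_twice_sum_by_involution[where \<sigma> = "\<lambda>((A, B), Z). ((B, A), Z)"])
    show "finite ?Q" using finite_disjoint_collisions[OF \<open>finite S\<close>, of w] \<open>finite R\<close> by simp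
    fix p assume "p \<in> ?Q"
    then obtain A B Z where p: "p = ((A, B), Z)" and AB: "(A, B) \<in> disjoint_collisions S w"
      and "Z \<in> R" by (metis mem_Sigma_iff prod.collapse)
    note ABD = disjoint_collisionsD[OF AB \<open>finite S\<close>]
    show "(\<lambda>((A, B), Z). ((B, A), Z)) p \<in> ?Q"
      using disjoint_collisions_swap[OF AB] \<open>Z \<in> R\<close> p by simp
    show "(\<lambda>((A, B), Z). ((B, A), Z)) ((\<lambda>((A, B), Z). ((B, A), Z)) p) = p"
      using p by simp
    show "weight ((\<lambda>((A, B), Z). ((B, A), Z)) p) = weight p"
      using p by (simp add: weight_def add.commute)
    show "0 \<le> weight p" using p by (simp add: weight_def)
    show "balanced p \<or> balanced ((\<lambda>((A, B), Z). ((B, A), Z)) p)"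
      using card_collision_code_swap[OF ABD(5,6,3), of Z] unfolding p balanced_def by simp linarith
  qed
  moreover have "sum weight ?G \<le> (5/2) ^ card S"
  proof -
    have "sum weight ?G \<le> (\<Sum>p\<in>?G. (1/4) ^ card (fst (collision_code p)))"
    proof (rule sum_mono)
      fix p assume "p \<in> ?G"
      then obtain A B Z where p: "p = ((A, B), Z)"
        and "2 * card (fst (collision_code p)) \<le> card A + card B"
        by (auto simp: balanced_def)
      then have "weight p \<le> (1/2) ^ (2 * card (fst (collision_code p)))"
        by (simp add: weight_def power_decreasing)
      then show "weight p \<le> (1/4) ^ card (fst (collision_code p))"
        by (simp add: power_mult power2_eq_square)
    qed
    also have "\<dots> \<le> (5/2) ^ card S"
      by (rule sum_quarter_power_collision_code_le[OF assms]) auto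
    finally show ?thesis .
  qed
  ultimately show ?thesis by (simp add: weight_def)
qed

lemma card_collisions_mult_card_subset_sums_le:
  assumes "finite S"
  shows "real (card (collisions S w)) * real (card (subset_sums S w)) \<le> 2 * 5 ^ card S"
proof -
  obtain R where R: "R \<subseteq> Pow S" "inj_on (sum w) R" and sums: "subset_sums S w = sum w ` R"
    using subset_image_inj[of "subset_sums S w" "sum w" "Pow S"] by (auto simp: subset_sums_def)
  let ?weight = "\<lambda>(A, B). (1/2::real) ^ (card A + card B)"
  have "real (card (collisions S w)) * real (card (subset_sums S w))
      \<le> 2 ^ card S * (\<Sum>q\<in>disjoint_collisions S w. ?weight q) * real (card R)"
    using card_collisions_le[OF assms, of w] R(2) sums by (simp add: card_image mult_right_mono)
  also have "\<dots> = 2 ^ card S * (\<Sum>(q, Z)\<in>disjoint_collisions S w \<times> R. ?weight q)"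
    by (simp add: sum.cartesian_product[symmetric] mult_ac flip: sum_distrib_left)
  also have "\<dots> \<le> 2 ^ card S * (2 * (5/2) ^ card S)"
    using sum_disjoint_collisions_times_representatives_le[OF assms R]
    by (intro mult_left_mono) (simp_all add: case_prod_beta)
  also have "\<dots> = 2 * 5 ^ card S"
    by (simp add: power_mult_distrib[symmetric])
  finally show ?thesis .
qed

lemma bnorm2_le_powr_if_many_subset_sums:
  fixes \<delta> c :: real
  assumes "finite S"
    and many: "2 powr ((1 - \<delta>) * card S) \<le> card (subset_sums S w)"
    and growth: "2 * 5 ^ card S \<le> 2 powr ((2 * c + 1 - \<delta>) * card S)"
  shows "bnorm2 S w \<le> 2 powr (c * card S)"
proof -
  let ?m = "real (card (subset_sums S w))"
  have "0 < ?m" using many powr_gt_zero[of 2 "(1 - \<delta>) * card S"] by linarith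
  have "bnorm2 S w ^ 2 * ?m \<le> 2 * 5 ^ card S"
    using card_collisions_mult_card_subset_sums_le[OF assms(1)] bnorm2_squared[OF assms(1)] by simp
  also have "\<dots> \<le> 2 powr (2 * c * card S) * 2 powr ((1 - \<delta>) * card S)"
    using growth by (simp add: algebra_simps flip: powr_add)
  also have "\<dots> \<le> 2 powr (2 * c * card S) * ?m"
    using many by (intro mult_left_mono) auto
  finally have "bnorm2 S w ^ 2 \<le> 2 powr (2 * c * card S)"
    using \<open>0 < ?m\<close> by (rule mult_right_le_imp_le)
  also have "\<dots> = (2 powr (c * card S)) ^ 2"
    by (simp add: power2_eq_square mult.assoc flip: powr_add)
  finally show ?thesis
    by (rule power2_le_imp_le) simp
qed

lemma eventually_mult_power_le_power:
  fixes a b c :: real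
  assumes "0 < a" and "a < b"
  shows "\<exists>N. \<forall>n\<ge>N. c * a ^ n \<le> b ^ n"
proof (intro exI allI impI)
  define e where "e = b / a - 1"
  have "0 < e" using assms by (simp add: e_def)
  fix n assume "nat \<lceil>c / e\<rceil> \<le> n"
  then have "c / e \<le> real n" using real_nat_ceiling_ge[of "c / e"] by linarith
  then have "c \<le> 1 + real n * e" using \<open>0 < e\<close> by (simp add: divide_le_eq)
  also have "\<dots> \<le> (1 + e) ^ n"
    using \<open>0 < e\<close> by (intro Bernoulli_inequality) simp
  finally have "c * a ^ n \<le> (1 + e) ^ n * a ^ n"
    using \<open>0 < a\<close> by (simp add: mult_right_mono)
  also have "\<dots> = b ^ n"
    using \<open>0 < a\<close> by (simp add: e_def flip: power_mult_distrib)
  finally show "c * a ^ n \<le> b ^ n" .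
qed

lemma five_less_two_powr: "(5::real) < 2 powr (476/205)"
proof (rule power_less_imp_less_base)
  have "(2 powr (476/205::real)) ^ 205 = 2 ^ 476"
    by (simp add: powr_realpow[symmetric] powr_powr)
  then show "(5::real) ^ 205 < (2 powr (476/205)) ^ 205" by simp
qed simp

theorem proposition5:
  shows "\<exists>\<delta>::real. \<delta> > 0 \<and> (\<exists>N::nat. \<forall>(S::nat set) (w::nat \<Rightarrow> int).
            finite S \<and> card S \<ge> N \<and>
            real (card (subset_sums S w)) \<ge> 2 powr ((1 - \<delta>) * real (card S))
            \<longrightarrow> bnorm2 S w \<le> 2 powr (0.661 * real (card S)))"
proof -
  obtain N where N: "\<And>n. N \<le> n \<Longrightarrow> 2 * 5 ^ n \<le> (2 powr (476/205) :: real) ^ n"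
    using eventually_mult_power_le_power[OF _ five_less_two_powr, of 2] by auto
  have growth: "2 * 5 ^ n \<le> 2 powr ((2 * 0.661 + 1 - 1/20500) * real n)" if "N \<le> n" for n
    using N[OF that] by (simp add: powr_realpow[symmetric] powr_powr)
  show ?thesis
  proof (intro exI[of _ "1/20500"] exI[of _ N] conjI allI impI)
    fix S :: "nat set" and w :: "nat \<Rightarrow> int"
    assume "finite S \<and> N \<le> card S
      \<and> 2 powr ((1 - 1/20500) * real (card S)) \<le> real (card (subset_sums S w))"
    then show "bnorm2 S w \<le> 2 powr (0.661 * real (card S))"
      using bnorm2_le_powr_if_many_subset_sums[of S "1/20500" w "0.661"] growth by blast
  qed simp
qed

end
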